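(* Let $\lambda=\bar p/(1-\bar p)$. For every distribution $\eta$ on $\mathcal R$, $\lim_{n\to\infty}E_\eta[S_n]/n=\lambda$. Moreover there exist constants $c_1,c_2>0$ such that for every $n\in\mathbb N$ and every distribution $\eta$ on $\mathcal R$, $$\big|E_\eta[S_n]-\lambda n-\eta\cdot\mathbf r\big|\le c_1e^{-c_2n},\qquad\text{where } \mathbf r=\Big(I-K+\frac{(\mathbf 1-\mathbf p)\mu D_{1-p}K}{1-\bar p}\Big)^{-1}\mathbf p-\lambda\mathbf 1.$$
   Context: Let $\mathcal R=\{1,\dots,N\}$ and let $K$ be a stochastic matrix on $\mathcal R$ whose Markov chain has a unique closed irreducible subset; let $\mu$ (row vector) be its unique stationary distribution. Fix $p:\mathcal R\to(0,1)$, $\mathbf p=(p(1),\dots,p(N))^t$, $\mathbf 1$ the all-ones column vector, $I$ the identity, $D_p$ the diagonal matrix with entries $p(i)$, $D_{1-p}=I-D_p$, $\bar p=\mu\cdot\mathbf p$. Under $P_\eta$, $(R_j)_{j\ge1}$ is a Markov chain with transition matrix $K$ and $R_1\sim\eta$, and given $(R_j)$ the $\xi(j)$, $j\ge1$, are independent Bernoulli$(p(R_j))$ (a "success" if $\xi(j)=1$, "failure" otherwise). $S_n=\inf\{k\ge0:\sum_{j=1}^{k+n}(1-\xi(j))=n\}$ is the number of successes before the $n$-th failure. (Equivalently $E_\eta[S_n]$ is the mean of one step $U_1$ of the forward branching-like process started from $U_0=n$.) *)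

theory Defs
  imports "HOL-Analysis.Analysis"
begin

(* States R = the finite type 'r; K :: real^'r^'r (rows indexed by current state). *)

definition stochastic_matrix :: "real^'r^'r \<Rightarrow> bool" where
  "stochastic_matrix K \<longleftrightarrow> (\<forall>i j. K$i$j \<ge> 0) \<and> (\<forall>i. (\<Sum>j\<in>UNIV. K$i$j) = 1)"

definition prob_vector :: "real^'r \<Rightarrow> bool" where
  "prob_vector v \<longleftrightarrow> (\<forall>i. v$i \<ge> 0) \<and> (\<Sum>i\<in>UNIV. v$i) = 1"

definition step_rel :: "real^'r^'r \<Rightarrow> ('r \<times> 'r) set" where
  "step_rel K = {(i,j). K$i$j > 0}"

definition closed_set :: "real^'r^'r \<Rightarrow> 'r set \<Rightarrow> bool" where
  "closed_set K C \<longleftrightarrow> C \<noteq> {} \<and> (\<forall>i\<in>C. \<forall>j. K$i$j > 0 \<longrightarrow> j \<in> C)"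

definition irreducible_set :: "real^'r^'r \<Rightarrow> 'r set \<Rightarrow> bool" where
  "irreducible_set K C \<longleftrightarrow> (\<forall>i\<in>C. \<forall>j\<in>C. (i,j) \<in> (step_rel K)\<^sup>*)"

definition unique_closed_irreducible :: "real^'r^'r \<Rightarrow> bool" where
  "unique_closed_irreducible K \<longleftrightarrow> (\<exists>!C. closed_set K C \<and> irreducible_set K C)"

definition stationary :: "real^'r^'r \<Rightarrow> real^'r \<Rightarrow> bool" where
  "stationary K \<mu> \<longleftrightarrow> prob_vector \<mu> \<and> \<mu> v* K = \<mu>"

(* Probability under P_eta that R_1..R_m = rs and xi(1..m) = xs (True = success). *)
definition path_prob ::
  "real^'r^'r \<Rightarrow> ('r \<Rightarrow> real) \<Rightarrow> real^'r \<Rightarrow> 'r list \<Rightarrow> bool list \<Rightarrow> real" where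
  "path_prob K p \<eta> rs xs =
     (if rs = [] then 1 else
       \<eta>$(hd rs) * (\<Prod>j<length rs - 1. K$(rs!j)$(rs!(j+1)))
       * (\<Prod>j<length rs. if xs!j then p (rs!j) else 1 - p (rs!j)))"

definition xi_prob :: "real^'r^'r \<Rightarrow> ('r \<Rightarrow> real) \<Rightarrow> real^'r \<Rightarrow> bool list \<Rightarrow> real" where
  "xi_prob K p \<eta> xs = (\<Sum>rs\<in>{rs::'r list. length rs = length xs}. path_prob K p \<eta> rs xs)"

definition failures :: "nat \<Rightarrow> bool list \<Rightarrow> nat" where
  "failures t xs = length (filter Not (take t xs))"

(* S_n = k is determined by xi(1..n+k): exactly n failures among the first n+k,
   and fewer than n among the first n+k-1 (when k > 0). *)
definition Sn_event :: "nat \<Rightarrow> nat \<Rightarrow> bool list \<Rightarrow> bool" where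
  "Sn_event n k xs \<longleftrightarrow> failures (n+k) xs = n \<and> (k = 0 \<or> failures (n+k-1) xs < n)"

definition prob_Sn :: "real^'r^'r \<Rightarrow> ('r \<Rightarrow> real) \<Rightarrow> real^'r \<Rightarrow> nat \<Rightarrow> nat \<Rightarrow> real" where
  "prob_Sn K p \<eta> n k =
     (\<Sum>xs\<in>{xs::bool list. length xs = n+k \<and> Sn_event n k xs}. xi_prob K p \<eta> xs)"

definition expect_Sn :: "real^'r^'r \<Rightarrow> ('r \<Rightarrow> real) \<Rightarrow> real^'r \<Rightarrow> nat \<Rightarrow> real" where
  "expect_Sn K p \<eta> n = (\<Sum>k. real k * prob_Sn K p \<eta> n k)"

definition diag_mat :: "('r \<Rightarrow> real) \<Rightarrow> real^'r^'r" where
  "diag_mat f = (\<chi> i j. if i = j then f i else 0)"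

definition outer_prod :: "real^'r \<Rightarrow> real^'r \<Rightarrow> real^'r^'r" where
  "outer_prod u v = (\<chi> i j. u$i * v$j)"

definition pbar :: "real^'r \<Rightarrow> ('r \<Rightarrow> real) \<Rightarrow> real" where
  "pbar \<mu> p = \<mu> \<bullet> (\<chi> i. p i)"

definition r_vec :: "real^'r^'r \<Rightarrow> ('r \<Rightarrow> real) \<Rightarrow> real^'r \<Rightarrow> real^'r" where
  "r_vec K p \<mu> =
     (let pv = (\<chi> i. p i)::real^'r; pb = pbar \<mu> p; lam = pb / (1 - pb) in
      matrix_inv (mat 1 - K + (1 / (1 - pb)) *\<^sub>R
                    outer_prod (1 - pv) (\<mu> v* (diag_mat (\<lambda>i. 1 - p i) ** K))) *v pv
      - lam *\<^sub>R 1)"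

end

theory Submission
  imports Defs
begin

text \<open>Conditioning on the first trial, the vector \<open>h\<^sub>n\<close> of conditional means \<open>E\<^sub>i[S\<^sub>n]\<close> satisfies
  \<open>h\<^sub>n\<^sub>+\<^sub>1 = D\<^sub>p K (h\<^sub>n\<^sub>+\<^sub>1 + 1) + D\<^sub>1\<^sub>-\<^sub>p K h\<^sub>n\<close>, i.e. \<open>h\<^sub>n\<^sub>+\<^sub>1 = \<Phi> h\<^sub>n + const\<close> with
  \<open>\<Phi> = (I - D\<^sub>p K)\<^sup>-\<^sup>1 D\<^sub>1\<^sub>-\<^sub>p K\<close> the transition matrix of the environment sampled right after
  failures. The vector \<open>r\<close> is exactly what makes \<open>e\<^sub>n = h\<^sub>n - \<lambda> n 1 - r\<close> satisfy
  \<open>e\<^sub>n\<^sub>+\<^sub>1 = \<Phi> e\<^sub>n\<close> and \<open>\<mu> D\<^sub>1\<^sub>-\<^sub>p K e\<^sub>n = 0\<close>. Since the environment has a single closed class,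
  \<open>\<Phi>\<close> satisfies a Doeblin condition, so the oscillation of \<open>e\<^sub>n\<close> contracts geometrically; the
  vanishing \<open>\<mu> D\<^sub>1\<^sub>-\<^sub>p K\<close>-average then forces \<open>e\<^sub>n\<close> itself to be exponentially small.\<close>

lemma ex_max_finite_UNIV:
  fixes f :: "'a::finite \<Rightarrow> 'b::linorder"
  obtains i0 where "\<And>i. f i \<le> f i0"
proof -
  have "Max (range f) \<in> range f"
    by (rule Max_in) auto
  then obtain i0 where "f i0 = Max (range f)"
    by (metis rangeE)
  then have "f i \<le> f i0" for i
    by (simp add: Max_ge)
  then show ?thesis
    by (rule that)
qed

lemma ex_min_finite_UNIV:
  fixes f :: "'a::finite \<Rightarrow> 'b::linorder"
  obtains i0 where "\<And>i. f i0 \<le> f i"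
proof -
  have "Min (range f) \<in> range f"
    by (rule Min_in) auto
  then obtain i0 where "f i0 = Min (range f)"
    by (metis rangeE)
  then have "f i0 \<le> f i" for i
    by (simp add: Min_le)
  then show ?thesis
    by (rule that)
qed

lemma sum_lists_length_Suc:
  fixes f :: "'a::finite list \<Rightarrow> 'b::comm_monoid_add"
  shows "(\<Sum>xs | length xs = Suc m. f xs) = (\<Sum>x\<in>UNIV. \<Sum>xs | length xs = m. f (x # xs))"
proof -
  have "{xs::'a list. length xs = Suc m} = (\<lambda>(x, xs). x # xs) ` (UNIV \<times> {xs. length xs = m})"
    by (auto simp: length_Suc_conv image_iff)
  moreover have "inj_on (\<lambda>(x, xs). x # xs) (UNIV \<times> {xs::'a list. length xs = m})"
    by (auto simp: inj_on_def)
  ultimately show ?thesis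
    by (simp add: sum.reindex sum.cartesian_product split_def)
qed

lemma matrix_vector_mult_sum:
  fixes A :: "real^'n^'m"
  shows "A *v sum f S = (\<Sum>x\<in>S. A *v f x)"
  by (induction S rule: infinite_finite_induct) (simp_all add: matrix_vector_right_distrib)

lemma sums_vec_iff:
  fixes f :: "nat \<Rightarrow> real^'n"
  shows "f sums s \<longleftrightarrow> (\<forall>i. (\<lambda>k. f k $ i) sums s $ i)"
proof
  assume "f sums s"
  then show "\<forall>i. (\<lambda>k. f k $ i) sums s $ i"
    unfolding sums_def by (auto dest: tendsto_vec_nth simp: sum_component)
next
  assume "\<forall>i. (\<lambda>k. f k $ i) sums s $ i"
  then show "f sums s"
    unfolding sums_def by (auto intro: vec_tendstoI simp: sum_component)
qed

lemma sums_nonneg_vec_bounded: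
  fixes f :: "nat \<Rightarrow> real^'n"
  assumes "\<And>k. 0 \<le> f k" and "\<And>N. (\<Sum>k<N. f k) \<le> B"
  shows "f sums (\<Sum>k. f k)"
proof -
  have "summable (\<lambda>k. f k $ i)" for i
    using assms by (intro summableI_nonneg_bounded[where x = "B $ i"])
      (auto simp: less_eq_vec_def simp flip: sum_component)
  then have "f sums (\<chi> i. \<Sum>k. f k $ i)"
    by (simp add: sums_vec_iff summable_sums)
  then show ?thesis
    by (metis sums_unique)
qed

lemma matrix_inv_right:
  fixes A :: "real^'n^'n"
  assumes "invertible A"
  shows "A ** matrix_inv A = mat 1"
  using assms unfolding invertible_def matrix_inv_def by (rule someI2_ex) auto

lemma matrix_inv_left:
  fixes A :: "real^'n^'n"
  assumes "invertible A"
  shows "matrix_inv A ** A = mat 1"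
  using assms unfolding invertible_def matrix_inv_def by (rule someI2_ex) auto

lemma nonneg_matrix_mono:
  fixes A :: "real^'n^'m"
  assumes "\<And>i j. 0 \<le> A $ i $ j" and "x \<le> y"
  shows "A *v x \<le> A *v y"
  using assms by (auto simp: less_eq_vec_def matrix_vector_mult_def intro!: sum_mono mult_left_mono)

lemma inner_mono_nonneg:
  fixes u x y :: "real^'n"
  assumes "0 \<le> u" and "x \<le> y"
  shows "u \<bullet> x \<le> u \<bullet> y"
  using assms by (auto simp: inner_vec_def less_eq_vec_def intro!: sum_mono mult_left_mono)

lemma prob_vector_inner_abs_le:
  assumes "prob_vector \<eta>" and "\<And>i. \<bar>x $ i\<bar> \<le> c"
  shows "\<bar>\<eta> \<bullet> x\<bar> \<le> c"
proof -
  have "\<bar>\<eta> \<bullet> x\<bar> \<le> (\<Sum>i\<in>UNIV. \<eta> $ i * \<bar>x $ i\<bar>)"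
    using assms(1) unfolding inner_vec_def prob_vector_def
    by (simp add: order_trans[OF sum_abs] abs_mult)
  also have "\<dots> \<le> (\<Sum>i\<in>UNIV. \<eta> $ i * c)"
    using assms by (intro sum_mono mult_left_mono) (auto simp: prob_vector_def)
  also have "\<dots> = c"
    using assms(1) by (simp add: prob_vector_def flip: sum_distrib_right)
  finally show ?thesis .
qed

lemma prob_vector_inner_1: "prob_vector \<eta> \<Longrightarrow> \<eta> \<bullet> 1 = 1"
  by (simp add: prob_vector_def inner_vec_def)

lemma tendsto_ratio_of_bounded_deviation:
  fixes a :: "nat \<Rightarrow> real"
  assumes "\<And>n. \<bar>a n - l * real n\<bar> \<le> B"
  shows "(\<lambda>n. a n / real n) \<longlonglongrightarrow> l"
proof -
  have "\<forall>\<^sub>F n in sequentially. norm (a n / real n - l) \<le> B / real n"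
  proof (rule eventually_sequentiallyI[of 1])
    fix n :: nat
    assume "1 \<le> n"
    then have "a n / real n - l = (a n - l * real n) / real n"
      by (simp add: field_simps)
    then show "norm (a n / real n - l) \<le> B / real n"
      using assms[of n] \<open>1 \<le> n\<close> by (simp add: abs_divide divide_right_mono)
  qed
  then have "(\<lambda>n. a n / real n - l) \<longlonglongrightarrow> 0"
    by (rule Lim_null_comparison[OF _ lim_const_over_n])
  then show ?thesis
    by (rule LIM_zero_cancel)
qed

section \<open>Stochastic matrices\<close>

lemma closed_set_rtrancl:
  assumes "(i, k) \<in> (step_rel K)\<^sup>*" "closed_set K C" "i \<in> C"
  shows "k \<in> C"
  using assms(1,3)
proof (induction rule: rtrancl_induct)
  case (step a b)
  then show ?case
    using assms(2) by (auto simp: closed_set_def step_rel_def)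
qed

context
  fixes K :: "real^'r::finite^'r"
  assumes K: "stochastic_matrix K"
begin

lemma stochastic_nonneg: "0 \<le> K $ i $ j"
  using K by (simp add: stochastic_matrix_def)

lemma stochastic_row_sum: "(\<Sum>j\<in>UNIV. K $ i $ j) = 1"
  using K by (simp add: stochastic_matrix_def)

lemma stochastic_mult_1: "K *v 1 = 1"
  using K by (simp add: stochastic_matrix_def vec_eq_iff matrix_vector_mult_def)

lemma stochastic_mult_le:
  assumes "\<And>j. x $ j \<le> M" shows "(K *v x) $ i \<le> M"
  using nonneg_matrix_mono[OF stochastic_nonneg, of x "M *\<^sub>R 1"] assms
  by (simp add: less_eq_vec_def matrix_vector_mult_scaleR stochastic_mult_1)

lemma stochastic_mult_ge:
  assumes "\<And>j. m \<le> x $ j" shows "m \<le> (K *v x) $ i"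
  using nonneg_matrix_mono[OF stochastic_nonneg, of "m *\<^sub>R 1" x] assms
  by (simp add: less_eq_vec_def matrix_vector_mult_scaleR stochastic_mult_1)

lemma stochastic_mult_abs_le:
  assumes "\<And>j. \<bar>x $ j\<bar> \<le> M" shows "\<bar>(K *v x) $ i\<bar> \<le> M"
proof -
  have "x $ j \<le> M" "- M \<le> x $ j" for j
    using assms[of j] by linarith+
  then have "(K *v x) $ i \<le> M" "- M \<le> (K *v x) $ i"
    by (intro stochastic_mult_le stochastic_mult_ge; simp)+
  then show ?thesis by linarith
qed

lemma stochastic_has_successor: "\<exists>j. 0 < K $ i $ j"
proof (rule ccontr)
  assume "\<nexists>j. 0 < K $ i $ j"
  then have "(\<Sum>j\<in>UNIV. K $ i $ j) = 0"
    using stochastic_nonneg by (intro sum.neutral) (auto intro: order.antisym simp: not_less)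
  then show False
    using K by (simp add: stochastic_matrix_def)
qed

lemma closed_irreducible_has_predecessor:
  assumes C: "closed_set K C" "irreducible_set K C" and "j \<in> C"
  shows "\<exists>k\<in>C. 0 < K $ k $ j"
proof -
  obtain j' where j': "0 < K $ j $ j'"
    using stochastic_has_successor by blast
  then have "j' \<in> C"
    using C(1) \<open>j \<in> C\<close> by (auto simp: closed_set_def)
  then have "(j', j) \<in> (step_rel K)\<^sup>*"
    using C(2) \<open>j \<in> C\<close> by (auto simp: irreducible_set_def)
  moreover have "(j, j') \<in> step_rel K"
    using j' by (simp add: step_rel_def)
  ultimately have "(j, j) \<in> (step_rel K)\<^sup>+"
    by (rule rtrancl_into_trancl2[rotated])
  then obtain k where "(j, k) \<in> (step_rel K)\<^sup>*" "(k, j) \<in> step_rel K"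
    by (blast dest: tranclD2)
  moreover from this(1) have "k \<in> C"
    using C(1) \<open>j \<in> C\<close> by (rule closed_set_rtrancl)
  ultimately show ?thesis
    by (auto simp: step_rel_def)
qed

end

lemma unique_closed_irreducible_reachable:
  fixes K :: "real^'r::finite^'r"
  assumes "closed_set K C0" "irreducible_set K C0"
    and uniq: "\<And>C. closed_set K C \<Longrightarrow> irreducible_set K C \<Longrightarrow> C = C0"
  shows "\<exists>c\<in>C0. (i, c) \<in> (step_rel K)\<^sup>*"
proof -
  define R where "R j = {k. (j, k) \<in> (step_rel K)\<^sup>*}" for j
  \<comment> \<open>a state reachable from i whose reachable set is smallest spans a closed irreducible class\<close>
  obtain j where j: "(i, j) \<in> (step_rel K)\<^sup>*"
    and j_min: "\<And>j'. (i, j') \<in> (step_rel K)\<^sup>* \<Longrightarrow> card (R j) \<le> card (R j')"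
    using ex_has_least_nat[of "\<lambda>j. (i, j) \<in> (step_rel K)\<^sup>*" i "\<lambda>j. card (R j)"] by auto
  have "closed_set K (R j)"
    by (auto simp: closed_set_def R_def step_rel_def intro: rtrancl_into_rtrancl)
  moreover have "irreducible_set K (R j)"
    unfolding irreducible_set_def
  proof (intro ballI)
    fix a b assume a: "a \<in> R j" and b: "b \<in> R j"
    have "R a \<subseteq> R j" and "(i, a) \<in> (step_rel K)\<^sup>*"
      using a j by (auto simp: R_def)
    then have "card (R j) \<le> card (R a)"
      using j_min by blast
    then have "R a = R j"
      using \<open>R a \<subseteq> R j\<close> card_mono[OF finite, of "R a" "R j"] by (intro card_subset_eq) auto
    then show "(a, b) \<in> (step_rel K)\<^sup>*"
      using b by (auto simp: R_def)
  qed
  ultimately have "R j = C0" by (rule uniq)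
  then show ?thesis
    using j by (auto simp: R_def)
qed

section \<open>Trials in a Markov environment\<close>

lemma path_prob_Cons:
  assumes "rs \<noteq> []"
  shows "path_prob K p \<eta> (r # rs) (x # xs)
    = \<eta> $ r * (if x then p r else 1 - p r) * path_prob K p (K $ r) rs xs"
proof -
  obtain m where m: "length rs = Suc m"
    using assms by (cases rs) auto
  have "(\<Prod>j<length (r # rs) - 1. K $ ((r # rs) ! j) $ ((r # rs) ! (j + 1)))
      = K $ r $ hd rs * (\<Prod>j<length rs - 1. K $ (rs ! j) $ (rs ! (j + 1)))"
    using assms m by (simp del: prod.lessThan_Suc add: prod.lessThan_Suc_shift hd_conv_nth)
  moreover have "(\<Prod>j<length (r # rs). if (x # xs) ! j then p ((r # rs) ! j) else 1 - p ((r # rs) ! j))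
      = (if x then p r else 1 - p r) * (\<Prod>j<length rs. if xs ! j then p (rs ! j) else 1 - p (rs ! j))"
    by (simp del: prod.lessThan_Suc add: prod.lessThan_Suc_shift cong: if_cong)
  ultimately show ?thesis
    using assms unfolding path_prob_def by simp
qed

lemma xi_prob_Cons:
  "xi_prob K p \<eta> (x # xs) = (\<Sum>r\<in>UNIV. \<eta> $ r * (if x then p r else 1 - p r)
      * (if xs = [] then 1 else xi_prob K p (K $ r) xs))"
proof (cases "xs = []")
  case True
  then show ?thesis
    by (simp add: xi_prob_def sum_lists_length_Suc path_prob_def cong: if_cong)
next
  case False
  have "xi_prob K p \<eta> (x # xs)
      = (\<Sum>r\<in>UNIV. \<Sum>rs | length rs = length xs. path_prob K p \<eta> (r # rs) (x # xs))"
    unfolding xi_prob_def by (simp add: sum_lists_length_Suc)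
  also have "\<dots> = (\<Sum>r\<in>UNIV. \<Sum>rs | length rs = length xs.
      \<eta> $ r * (if x then p r else 1 - p r) * path_prob K p (K $ r) rs xs)"
    using False by (intro sum.cong refl, subst path_prob_Cons) auto
  finally show ?thesis
    using False by (simp add: xi_prob_def sum_distrib_left)
qed

lemma failures_le: "failures t xs \<le> t"
  unfolding failures_def using length_filter_le[of Not "take t xs"] by simp

lemma failures_Suc_Cons [simp]: "failures (Suc t) (b # xs) = (if b then 0 else 1) + failures t xs"
  unfolding failures_def by simp

lemma Sn_event_True_Cons:
  "Sn_event (Suc n) k (True # xs) \<longleftrightarrow> 0 < k \<and> Sn_event (Suc n) (k - 1) xs"
  using failures_le[of n xs]
  by (cases k; cases "k - 1") (auto simp: Sn_event_def)

lemma Sn_event_False_Cons: "Sn_event (Suc n) k (False # xs) \<longleftrightarrow> Sn_event n k xs"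
  by (cases k) (auto simp: Sn_event_def)

lemma Sn_event_0: "Sn_event 0 k xs \<longleftrightarrow> k = 0"
  by (auto simp: Sn_event_def failures_def)

locale bernoulli_chain =
  fixes K :: "real^'r::finite^'r" and p :: "'r \<Rightarrow> real"
  assumes stochastic: "stochastic_matrix K"
    and p_pos: "\<And>i. 0 < p i" and p_less_1: "\<And>i. p i < 1"
begin

definition pvec :: "real^'r" where
  "pvec = (\<chi> i. p i)"

definition trial_prob :: "bool \<Rightarrow> 'r \<Rightarrow> real" where
  "trial_prob b i = (if b then p i else 1 - p i)"

text \<open>\<open>trial_mat True\<close> and \<open>trial_mat False\<close> are the paper's \<open>D\<^sub>p K\<close> and \<open>D\<^sub>1\<^sub>-\<^sub>p K\<close>.\<close>

definition trial_mat :: "bool \<Rightarrow> real^'r^'r" where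
  "trial_mat b = (\<chi> i j. trial_prob b i * K $ i $ j)"

lemma trial_mat_mult_component:
  "(trial_mat b *v x) $ i = trial_prob b i * (K *v x) $ i"
  by (simp add: trial_mat_def matrix_vector_mult_def sum_distrib_left mult.assoc)

lemma trial_mat_mult: "trial_mat b *v x = (\<chi> i. trial_prob b i * (K *v x) $ i)"
  by (simp add: vec_eq_iff trial_mat_mult_component)

lemma trial_mat_nonneg: "0 \<le> trial_mat b $ i $ j"
  using p_pos[of i] p_less_1[of i] stochastic_nonneg[OF stochastic, of i j]
  by (simp add: trial_mat_def trial_prob_def)

lemma trial_mat_True_False: "trial_mat True *v x + trial_mat False *v x = K *v x"
  by (simp add: vec_eq_iff trial_mat_mult_component trial_prob_def algebra_simps)

lemma trial_mat_mult_1: "trial_mat True *v 1 = pvec" "trial_mat False *v 1 = 1 - pvec"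
  by (simp_all add: vec_eq_iff trial_mat_mult_component trial_prob_def pvec_def
      stochastic_mult_1[OF stochastic])

lemma success_fixpoint_eq_0:
  assumes "trial_mat True *v y = y"
  shows "y = 0"
proof -
  obtain i0 where i0: "\<And>i. \<bar>y $ i\<bar> \<le> \<bar>y $ i0\<bar>"
    using ex_max_finite_UNIV[of "\<lambda>i. \<bar>y $ i\<bar>"] by blast
  have "\<bar>y $ i0\<bar> = p i0 * \<bar>(K *v y) $ i0\<bar>"
    using arg_cong[OF assms, of "\<lambda>v. \<bar>v $ i0\<bar>"] p_pos[of i0]
    by (simp add: trial_mat_mult_component trial_prob_def abs_mult)
  also have "\<dots> \<le> p i0 * \<bar>y $ i0\<bar>"
    using p_pos[of i0] i0 by (intro mult_left_mono stochastic_mult_abs_le[OF stochastic]) auto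
  finally have "(1 - p i0) * \<bar>y $ i0\<bar> \<le> 0"
    by (simp add: algebra_simps)
  then have "\<bar>y $ i0\<bar> = 0"
    using p_less_1[of i0] by (simp add: mult_le_0_iff)
  then show ?thesis
    using i0 by (simp add: vec_eq_iff)
qed

lemma success_subsolution_bound:
  assumes "\<And>i. y $ i \<le> (trial_mat True *v y) $ i + c"
  shows "y $ i \<le> (\<Sum>j\<in>UNIV. \<bar>c\<bar> / (1 - p j))"
proof -
  obtain i0 where i0: "\<And>i. y $ i \<le> y $ i0"
    using ex_max_finite_UNIV[of "\<lambda>i. y $ i"] by blast
  have "(trial_mat True *v y) $ i0 \<le> p i0 * y $ i0"
    using p_pos[of i0] i0
    by (simp add: trial_mat_mult_component trial_prob_def stochastic_mult_le[OF stochastic])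
  then have "(1 - p i0) * y $ i0 \<le> \<bar>c\<bar>"
    using assms[of i0] by (simp add: algebra_simps)
  then have "y $ i0 \<le> \<bar>c\<bar> / (1 - p i0)"
    using p_less_1[of i0] by (simp add: pos_le_divide_eq mult.commute)
  also have "\<dots> \<le> (\<Sum>j\<in>UNIV. \<bar>c\<bar> / (1 - p j))"
    using p_less_1 by (intro member_le_sum) (auto intro: divide_nonneg_pos simp: less_imp_le)
  finally show ?thesis
    using i0[of i] by simp
qed

lemma invertible_mat_1_minus_success: "invertible (mat 1 - trial_mat True)"
proof -
  have "x = 0" if "(mat 1 - trial_mat True) *v x = 0" for x
    using that by (intro success_fixpoint_eq_0) (simp add: matrix_vector_mult_diff_rdistrib)
  then show ?thesis
    by (simp add: invertible_left_inverse matrix_left_invertible_ker)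
qed

text \<open>\<open>(I - D\<^sub>p K)\<^sup>-\<^sup>1 D\<^sub>1\<^sub>-\<^sub>p K = \<Sum>\<^sub>m (D\<^sub>p K)\<^sup>m D\<^sub>1\<^sub>-\<^sub>p K\<close>: its row \<open>i\<close> is the law of the
  environment one step after the first failure, starting from \<open>i\<close>.\<close>

definition next_failure_mat :: "real^'r^'r" where
  "next_failure_mat = matrix_inv (mat 1 - trial_mat True) ** trial_mat False"

lemma next_failure_mat_iff:
  "y = trial_mat True *v y + trial_mat False *v x \<longleftrightarrow> y = next_failure_mat *v x"
proof
  assume "y = trial_mat True *v y + trial_mat False *v x"
  then have "(mat 1 - trial_mat True) *v y = trial_mat False *v x"
    by (simp add: matrix_vector_mult_diff_rdistrib algebra_simps)
  then have "matrix_inv (mat 1 - trial_mat True) *v ((mat 1 - trial_mat True) *v y)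
      = next_failure_mat *v x"
    by (simp add: next_failure_mat_def matrix_vector_mul_assoc)
  moreover have "matrix_inv (mat 1 - trial_mat True) ** (mat 1 - trial_mat True) = mat 1"
    using invertible_mat_1_minus_success by (rule matrix_inv_left)
  ultimately show "y = next_failure_mat *v x"
    by (simp add: matrix_vector_mul_assoc)
next
  assume "y = next_failure_mat *v x"
  then have "(mat 1 - trial_mat True) *v y = trial_mat False *v x"
    using matrix_inv_right[OF invertible_mat_1_minus_success]
    by (simp add: next_failure_mat_def matrix_vector_mul_assoc matrix_mul_assoc)
  then show "y = trial_mat True *v y + trial_mat False *v x"
    by (simp add: matrix_vector_mult_diff_rdistrib algebra_simps)
qed

lemma next_failure_mult_1: "next_failure_mat *v 1 = 1"
  using next_failure_mat_iff[of 1 1] trial_mat_mult_1 by simp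

lemma next_failure_nonneg:
  assumes "0 \<le> x"
  shows "0 \<le> next_failure_mat *v x"
proof -
  define y where "y = next_failure_mat *v x"
  obtain i0 where i0: "\<And>i. y $ i0 \<le> y $ i"
    using ex_min_finite_UNIV[of "\<lambda>i. y $ i"] by blast
  have "y $ i0 = p i0 * (K *v y) $ i0 + (trial_mat False *v x) $ i0"
    using arg_cong[OF next_failure_mat_iff[THEN iffD2, OF y_def], of "\<lambda>v. v $ i0"]
    by (simp add: trial_mat_mult_component trial_prob_def)
  moreover have "p i0 * y $ i0 \<le> p i0 * (K *v y) $ i0"
    using p_pos[of i0] i0 by (intro mult_left_mono stochastic_mult_ge[OF stochastic]) auto
  moreover have "0 \<le> (trial_mat False *v x) $ i0"
    using nonneg_matrix_mono[OF trial_mat_nonneg assms] by (simp add: less_eq_vec_def)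
  ultimately have "0 \<le> (1 - p i0) * y $ i0"
    by (simp add: algebra_simps)
  then have "0 \<le> y $ i0"
    using p_less_1[of i0] by (simp add: zero_le_mult_iff)
  then show ?thesis
    using i0 by (auto simp: y_def less_eq_vec_def intro: order_trans)
qed


section \<open>Distribution and mean of \<open>S\<^sub>n\<close>\<close>

definition path_vec :: "bool list \<Rightarrow> real^'r" where
  "path_vec xs = foldr (\<lambda>b v. trial_mat b *v v) xs 1"

lemma path_vec_simps [simp]:
  "path_vec [] = 1" "path_vec (b # xs) = trial_mat b *v path_vec xs"
  by (simp_all add: path_vec_def)

lemma path_vec_nonneg: "0 \<le> path_vec xs"
proof (induction xs)
  case (Cons b xs)
  then show ?case
    using nonneg_matrix_mono[OF trial_mat_nonneg, of 0 "path_vec xs" b] by simp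
qed (simp add: less_eq_vec_def)

lemma xi_prob_eq_inner: "xs \<noteq> [] \<Longrightarrow> xi_prob K p \<eta> xs = \<eta> \<bullet> path_vec xs"
proof (induction xs arbitrary: \<eta>)
  case (Cons x xs)
  have "xi_prob K p \<eta> (x # xs) = (\<Sum>r\<in>UNIV. \<eta> $ r * (trial_prob x r * (K $ r \<bullet> path_vec xs)))"
    using Cons.IH
    by (cases "xs = []")
      (simp_all add: xi_prob_Cons trial_prob_def inner_vec_def mult.assoc stochastic_row_sum[OF stochastic])
  also have "\<dots> = \<eta> \<bullet> path_vec (x # xs)"
    by (simp add: inner_vec_def trial_mat_mult matrix_vector_mul_component)
  finally show ?case .
qed simp

text \<open>Entry \<open>i\<close> of \<open>Sn_prob_vec n k\<close> is \<open>P\<^sub>i(S\<^sub>n = k)\<close>.\<close>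

definition Sn_prob_vec :: "nat \<Rightarrow> nat \<Rightarrow> real^'r" where
  "Sn_prob_vec n k = (\<Sum>xs | length xs = n + k \<and> Sn_event n k xs. path_vec xs)"

lemma prob_Sn_eq_inner:
  assumes "prob_vector \<eta>"
  shows "prob_Sn K p \<eta> n k = \<eta> \<bullet> Sn_prob_vec n k"
proof (cases "n + k = 0")
  case True
  then have "{xs. length xs = n + k \<and> Sn_event n k xs} = {[]}"
    by (auto simp: Sn_event_def failures_def)
  then show ?thesis
    using prob_vector_inner_1[OF assms]
    by (simp add: prob_Sn_def Sn_prob_vec_def xi_prob_def path_prob_def)
next
  case False
  then show ?thesis
    unfolding prob_Sn_def Sn_prob_vec_def inner_sum_right
    by (intro sum.cong refl xi_prob_eq_inner) auto
qed

lemma Sn_prob_vec_nonneg: "0 \<le> Sn_prob_vec n k"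
  unfolding Sn_prob_vec_def by (intro sum_nonneg path_vec_nonneg)

lemma Sn_prob_vec_0: "Sn_prob_vec 0 k = (if k = 0 then 1 else 0)"
proof -
  have "{xs. length xs = k \<and> Sn_event 0 k xs} = (if k = 0 then {[]} else {})"
    by (auto simp: Sn_event_0)
  then show ?thesis
    by (simp add: Sn_prob_vec_def)
qed

lemma Sn_prob_vec_eq_sum_lists:
  "Sn_prob_vec n k = (\<Sum>xs | length xs = n + k. if Sn_event n k xs then path_vec xs else 0)"
proof -
  have "finite {xs::bool list. length xs = n + k}"
    using finite_lists_length_eq[of "UNIV :: bool set"] by simp
  from sum.inter_filter[OF this] show ?thesis
    unfolding Sn_prob_vec_def by simp
qed

text \<open>Conditioning on the first trial: after a success one still waits for \<open>n + 1\<close> failures,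
  after a failure for \<open>n\<close>.\<close>

lemma Sn_prob_vec_Suc:
  "Sn_prob_vec (Suc n) k = (if 0 < k then trial_mat True *v Sn_prob_vec (Suc n) (k - 1) else 0)
    + trial_mat False *v Sn_prob_vec n k"
proof -
  let ?E = "\<lambda>b xs. Sn_event (Suc n) k (b # xs)"
  have "Sn_prob_vec (Suc n) k
      = (\<Sum>b\<in>UNIV. \<Sum>xs | length xs = n + k. if ?E b xs then path_vec (b # xs) else 0)"
    unfolding Sn_prob_vec_eq_sum_lists by (simp only: add_Suc sum_lists_length_Suc)
  also have "\<dots> = (\<Sum>xs | length xs = n + k. if ?E False xs then path_vec (False # xs) else 0)
      + (\<Sum>xs | length xs = n + k. if ?E True xs then path_vec (True # xs) else 0)"
    by (simp add: UNIV_bool)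
  also have "(\<Sum>xs | length xs = n + k. if ?E False xs then path_vec (False # xs) else 0)
      = trial_mat False *v Sn_prob_vec n k"
    unfolding Sn_prob_vec_eq_sum_lists matrix_vector_mult_sum
    by (rule sum.cong) (auto simp: Sn_event_False_Cons)
  also have "(\<Sum>xs | length xs = n + k. if ?E True xs then path_vec (True # xs) else 0)
      = (if 0 < k then trial_mat True *v Sn_prob_vec (Suc n) (k - 1) else 0)"
  proof (cases k)
    case (Suc k')
    then show ?thesis
      unfolding Sn_prob_vec_eq_sum_lists matrix_vector_mult_sum
      by (simp, intro sum.cong) (auto simp: Sn_event_True_Cons)
  qed (simp add: Sn_event_True_Cons)
  finally show ?thesis
    by (simp add: add.commute)
qed


lemma Sn_prob_vec_Suc_0: "Sn_prob_vec (Suc n) 0 = trial_mat False *v Sn_prob_vec n 0"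
  using Sn_prob_vec_Suc[of n 0] by simp

lemma Sn_prob_vec_Suc_Suc:
  "Sn_prob_vec (Suc n) (Suc k)
    = trial_mat True *v Sn_prob_vec (Suc n) k + trial_mat False *v Sn_prob_vec n (Suc k)"
  using Sn_prob_vec_Suc[of n "Suc k"] by simp

lemma weighted_partial_sum_Sn_prob_vec_Suc:
  "(\<Sum>k<Suc N. w k *\<^sub>R Sn_prob_vec (Suc n) k)
    = trial_mat True *v (\<Sum>k<N. w (Suc k) *\<^sub>R Sn_prob_vec (Suc n) k)
      + trial_mat False *v (\<Sum>k<Suc N. w k *\<^sub>R Sn_prob_vec n k)"
proof -
  have "(\<Sum>k<Suc N. w k *\<^sub>R Sn_prob_vec m k)
      = w 0 *\<^sub>R Sn_prob_vec m 0 + (\<Sum>k<N. w (Suc k) *\<^sub>R Sn_prob_vec m (Suc k))" for m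
    by (rule sum.lessThan_Suc_shift)
  then show ?thesis
    by (simp add: Sn_prob_vec_Suc_0 Sn_prob_vec_Suc_Suc matrix_vector_mult_sum sum.distrib
        matrix_vector_right_distrib matrix_vector_mult_scaleR scaleR_right_distrib add_ac)
qed

lemma Sn_prob_partial_sum_le_1: "(\<Sum>k<N. Sn_prob_vec n k) \<le> 1"
proof (induction n arbitrary: N)
  case 0
  then show ?case
    by (simp add: Sn_prob_vec_0 less_eq_vec_def)
next
  case (Suc n)
  note partial_sum_n_le_1 = Suc.IH
  show ?case
  proof (induction N)
    case (Suc N)
    have "trial_mat True *v (\<Sum>k<N. Sn_prob_vec (Suc n) k) + trial_mat False *v (\<Sum>k<Suc N. Sn_prob_vec n k)
        \<le> trial_mat True *v 1 + trial_mat False *v 1"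
      by (intro add_mono nonneg_matrix_mono[OF trial_mat_nonneg] Suc.IH partial_sum_n_le_1)
    then show ?case
      using weighted_partial_sum_Sn_prob_vec_Suc[where w = "\<lambda>_. 1" and N = N and n = n] by (simp add: trial_mat_mult_1)
  qed (simp add: less_eq_vec_def)
qed

lemma Sn_prob_vec_sums_1: "(\<lambda>k. Sn_prob_vec n k) sums 1"
proof (induction n)
  case 0
  show ?case
    using sums_single[of 0 "\<lambda>_. 1 :: real^'r"] by (simp add: Sn_prob_vec_0)
next
  case (Suc n)
  define s where "s = (\<Sum>k. Sn_prob_vec (Suc n) k)"
  have "(\<lambda>k. Sn_prob_vec (Suc n) k) sums s"
    unfolding s_def using Sn_prob_vec_nonneg Sn_prob_partial_sum_le_1
    by (rule sums_nonneg_vec_bounded)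
  then have "(\<lambda>k. Sn_prob_vec (Suc n) (Suc k)) sums (s - Sn_prob_vec (Suc n) 0)"
    by (simp add: sums_Suc_iff)
  moreover have "(\<lambda>k. Sn_prob_vec (Suc n) (Suc k))
      sums (trial_mat True *v s + trial_mat False *v (1 - Sn_prob_vec n 0))"
    unfolding Sn_prob_vec_Suc_Suc
    using \<open>(\<lambda>k. Sn_prob_vec (Suc n) k) sums s\<close> Suc.IH
    by (intro sums_add bounded_linear.sums[OF matrix_vector_mul_bounded_linear])
      (simp_all add: sums_Suc_iff)
  ultimately have "s = trial_mat True *v s + trial_mat False *v 1"
    by (auto dest: sums_unique2 simp: Sn_prob_vec_Suc_0 matrix_vector_mult_diff_distrib algebra_simps)
  then show ?case
    using \<open>(\<lambda>k. Sn_prob_vec (Suc n) k) sums s\<close> next_failure_mult_1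
    by (simp add: next_failure_mat_iff)
qed

lemma scaleR_Sn_prob_vec_0: "real k *\<^sub>R Sn_prob_vec 0 k = 0"
  by (simp add: Sn_prob_vec_0)

lemma Sn_moment_partial_sum_bounded: "\<exists>M. \<forall>N. (\<Sum>k<N. real k *\<^sub>R Sn_prob_vec n k) \<le> M *\<^sub>R 1"
proof (induction n)
  case 0
  show ?case
    by (rule exI[of _ 0]) (simp add: scaleR_Sn_prob_vec_0)
next
  case (Suc n)
  then obtain M where M: "\<And>N. (\<Sum>k<N. real k *\<^sub>R Sn_prob_vec n k) \<le> M *\<^sub>R 1"
    by blast
  define y where "y N = (\<Sum>k<N. real k *\<^sub>R Sn_prob_vec (Suc n) k)" for N
  have "y N $ i \<le> (trial_mat True *v y N) $ i + (1 + \<bar>M\<bar>)" for N i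
  proof -
    have "y N \<le> y (Suc N)"
      using Sn_prob_vec_nonneg by (simp add: y_def scaleR_nonneg_nonneg)
    also have "\<dots> = trial_mat True *v y N + trial_mat True *v (\<Sum>k<N. Sn_prob_vec (Suc n) k)
        + trial_mat False *v (\<Sum>k<Suc N. real k *\<^sub>R Sn_prob_vec n k)"
      unfolding y_def weighted_partial_sum_Sn_prob_vec_Suc
      by (simp add: scaleR_left_distrib sum.distrib matrix_vector_right_distrib)
    also have "\<dots> \<le> trial_mat True *v y N + trial_mat True *v 1 + trial_mat False *v (M *\<^sub>R 1)"
      by (intro add_mono order_refl nonneg_matrix_mono[OF trial_mat_nonneg]
          Sn_prob_partial_sum_le_1 M)
    finally have "y N $ i \<le> (trial_mat True *v y N) $ i + p i + M * (1 - p i)"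
      by (simp add: less_eq_vec_def matrix_vector_mult_scaleR trial_mat_mult_1 pvec_def)
    moreover have "p i + M * (1 - p i) \<le> 1 + \<bar>M\<bar>"
      using p_pos[of i] p_less_1[of i]
      by (smt (verit) abs_ge_self mult_left_le mult_le_cancel_right1 mult_nonneg_nonneg)
    ultimately show ?thesis
      by linarith
  qed
  then have "y N $ i \<le> (\<Sum>j\<in>UNIV. \<bar>1 + \<bar>M\<bar>\<bar> / (1 - p j))" for N i
    by (rule success_subsolution_bound)
  then have "y N \<le> (\<Sum>j\<in>UNIV. \<bar>1 + \<bar>M\<bar>\<bar> / (1 - p j)) *\<^sub>R 1" for N
    by (simp add: less_eq_vec_def)
  then show ?case
    unfolding y_def by blast
qed

definition Sn_mean_vec :: "nat \<Rightarrow> real^'r" where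
  "Sn_mean_vec n = (\<Sum>k. real k *\<^sub>R Sn_prob_vec n k)"

lemma Sn_mean_vec_sums: "(\<lambda>k. real k *\<^sub>R Sn_prob_vec n k) sums Sn_mean_vec n"
proof -
  obtain M where "\<And>N. (\<Sum>k<N. real k *\<^sub>R Sn_prob_vec n k) \<le> M *\<^sub>R 1"
    using Sn_moment_partial_sum_bounded by blast
  then show ?thesis
    unfolding Sn_mean_vec_def
    by (intro sums_nonneg_vec_bounded) (simp_all add: Sn_prob_vec_nonneg scaleR_nonneg_nonneg)
qed

lemma Sn_mean_vec_0: "Sn_mean_vec 0 = 0"
  by (simp add: Sn_mean_vec_def scaleR_Sn_prob_vec_0)

lemma Sn_mean_vec_Suc:
  "Sn_mean_vec (Suc n)
    = trial_mat True *v (Sn_mean_vec (Suc n) + 1) + trial_mat False *v Sn_mean_vec n"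
proof -
  have shifted: "(\<lambda>k. real (Suc k) *\<^sub>R Sn_prob_vec m (Suc k)) sums Sn_mean_vec m" for m
    using sums_Suc_iff[of "\<lambda>k. real k *\<^sub>R Sn_prob_vec m k"] Sn_mean_vec_sums[of m] by simp
  have "(\<lambda>k. real (Suc k) *\<^sub>R Sn_prob_vec (Suc n) (Suc k)) sums Sn_mean_vec (Suc n)"
    by (rule shifted)
  moreover have "(\<lambda>k. real (Suc k) *\<^sub>R Sn_prob_vec (Suc n) (Suc k))
      = (\<lambda>k. trial_mat True *v (real k *\<^sub>R Sn_prob_vec (Suc n) k + Sn_prob_vec (Suc n) k)
          + trial_mat False *v (real (Suc k) *\<^sub>R Sn_prob_vec n (Suc k)))"
    by (simp add: Sn_prob_vec_Suc_Suc algebra_simps)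
  moreover have "\<dots> sums (trial_mat True *v (Sn_mean_vec (Suc n) + 1) + trial_mat False *v Sn_mean_vec n)"
    using Sn_mean_vec_sums Sn_prob_vec_sums_1 shifted
    by (intro sums_add bounded_linear.sums[OF matrix_vector_mul_bounded_linear])
  ultimately show ?thesis
    by (simp add: sums_unique2)
qed

lemma expect_Sn_eq_inner:
  assumes "prob_vector \<eta>"
  shows "expect_Sn K p \<eta> n = \<eta> \<bullet> Sn_mean_vec n"
proof -
  have "(\<lambda>k. \<eta> \<bullet> (real k *\<^sub>R Sn_prob_vec n k)) sums (\<eta> \<bullet> Sn_mean_vec n)"
    using Sn_mean_vec_sums by (rule bounded_linear.sums[OF bounded_linear_inner_right])
  then show ?thesis
    by (simp add: expect_Sn_def prob_Sn_eq_inner[OF assms] sums_iff)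
qed


section \<open>Doeblin condition for the chain observed at failures\<close>

lemma next_failure_axis_nonneg: "0 \<le> (next_failure_mat *v axis j0 1) $ i"
proof -
  have "0 \<le> axis j0 (1::real)"
    by (simp add: less_eq_vec_def axis_def)
  from next_failure_nonneg[OF this] show ?thesis
    by (simp add: less_eq_vec_def)
qed

lemma next_failure_axis_zero:
  assumes "(next_failure_mat *v axis j0 1) $ i = 0"
  shows "K $ i $ j0 = 0" and "0 < K $ i $ j \<Longrightarrow> (next_failure_mat *v axis j0 1) $ j = 0"
proof -
  define y where "y = next_failure_mat *v axis j0 1"
  have y_nonneg: "0 \<le> y $ k" for k
    unfolding y_def by (rule next_failure_axis_nonneg)
  have K_y_nonneg: "0 \<le> (K *v y) $ i"
    using stochastic_mult_ge[OF stochastic, of 0 y] y_nonneg by simp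
  have "y $ i = p i * (K *v y) $ i + (1 - p i) * K $ i $ j0"
  proof -
    have "(K *v axis j0 1) $ i = K $ i $ j0"
      by (simp add: matrix_vector_mult_def axis_def mult.commute[of _ "if _ then _ else _"]
          if_distrib[of "\<lambda>c. c * _"] cong: if_cong)
    then show ?thesis
      using arg_cong[OF next_failure_mat_iff[THEN iffD2, OF y_def], of "\<lambda>v. v $ i"]
      by (simp add: trial_mat_mult_component trial_prob_def)
  qed
  then have "(K *v y) $ i = 0" "K $ i $ j0 = 0"
    using assms K_y_nonneg stochastic_nonneg[OF stochastic, of i j0] p_pos[of i] p_less_1[of i]
    by (simp_all add: y_def add_nonneg_eq_0_iff)
  then show "K $ i $ j0 = 0"
    by simp
  assume "0 < K $ i $ j"
  have "K $ i $ j * y $ j = 0"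
    using \<open>(K *v y) $ i = 0\<close> stochastic_nonneg[OF stochastic] y_nonneg
    by (simp add: matrix_vector_mult_def sum_nonneg_eq_0_iff)
  then show "(next_failure_mat *v axis j0 1) $ j = 0"
    using \<open>0 < K $ i $ j\<close> by (simp add: y_def)
qed

lemma next_failure_axis_pos:
  assumes C0: "closed_set K C0" "irreducible_set K C0"
    and uniq: "\<And>C. closed_set K C \<Longrightarrow> irreducible_set K C \<Longrightarrow> C = C0"
    and "j0 \<in> C0"
  shows "0 < (next_failure_mat *v axis j0 1) $ i"
proof (rule ccontr)
  define y where "y = next_failure_mat *v axis j0 1"
  assume "\<not> 0 < (next_failure_mat *v axis j0 1) $ i"
  then have "y $ i = 0"
    using next_failure_axis_nonneg[of j0 i] by (simp add: y_def)
  have zero_reach: "y $ b = 0" if "(a, b) \<in> (step_rel K)\<^sup>*" "y $ a = 0" for a b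
    using that by (induction rule: rtrancl_induct)
      (auto simp: step_rel_def y_def intro: next_failure_axis_zero(2))
  obtain k where "k \<in> C0" "0 < K $ k $ j0"
    using closed_irreducible_has_predecessor[OF stochastic C0 \<open>j0 \<in> C0\<close>] by blast
  obtain c where "c \<in> C0" "(i, c) \<in> (step_rel K)\<^sup>*"
    using unique_closed_irreducible_reachable[OF C0 uniq] by blast
  moreover have "(c, k) \<in> (step_rel K)\<^sup>*"
    using C0(2) \<open>c \<in> C0\<close> \<open>k \<in> C0\<close> by (simp add: irreducible_set_def)
  ultimately have "y $ k = 0"
    using zero_reach \<open>y $ i = 0\<close> by (meson rtrancl_trans)
  then show False
    using next_failure_axis_zero(1) \<open>0 < K $ k $ j0\<close> by (simp add: y_def)
qed

lemma next_failure_doeblin: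
  assumes "unique_closed_irreducible K"
  obtains j0 \<delta> where "0 < \<delta>" "\<delta> \<le> 1/2" "\<And>i. \<delta> \<le> (next_failure_mat *v axis j0 1) $ i"
proof -
  obtain C0 where C0: "closed_set K C0" "irreducible_set K C0"
    and uniq: "\<And>C. closed_set K C \<Longrightarrow> irreducible_set K C \<Longrightarrow> C = C0"
    using assms unfolding unique_closed_irreducible_def by blast
  obtain j0 where "j0 \<in> C0"
    using C0(1) by (auto simp: closed_set_def)
  define y where "y = next_failure_mat *v axis j0 1"
  obtain i0 where i0: "\<And>i. y $ i0 \<le> y $ i"
    using ex_min_finite_UNIV[of "\<lambda>i. y $ i"] by blast
  have "0 < y $ i0"
    unfolding y_def using next_failure_axis_pos[OF C0 uniq \<open>j0 \<in> C0\<close>] .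
  then show ?thesis
    using i0 by (intro that[of "min (y $ i0) (1/2)" j0]) (auto simp: y_def min.coboundedI1)
qed

lemma next_failure_contract:
  assumes \<delta>: "\<And>i. \<delta> \<le> (next_failure_mat *v axis j0 1) $ i"
    and x: "\<And>i. m \<le> x $ i" "\<And>i. x $ i \<le> M"
  shows "m + \<delta> * (x $ j0 - m) \<le> (next_failure_mat *v x) $ i"
    and "(next_failure_mat *v x) $ i \<le> M - \<delta> * (M - x $ j0)"
proof -
  \<comment> \<open>apply positivity of \<open>\<Phi>\<close> to \<open>x\<close> minus the largest multiples of \<open>1\<close> and \<open>e\<^sub>j\<^sub>0\<close> below it, and dually\<close>
  have "0 \<le> next_failure_mat *v (x - m *\<^sub>R 1 - (x $ j0 - m) *\<^sub>R axis j0 1)"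
    using x by (intro next_failure_nonneg) (simp add: less_eq_vec_def axis_def)
  then have "m + (x $ j0 - m) * (next_failure_mat *v axis j0 1) $ i \<le> (next_failure_mat *v x) $ i"
    by (simp add: less_eq_vec_def algebra_simps next_failure_mult_1)
  moreover have "\<delta> * (x $ j0 - m) \<le> (x $ j0 - m) * (next_failure_mat *v axis j0 1) $ i"
    using mult_right_mono[OF \<delta>[of i], of "x $ j0 - m"] x(1)[of j0] by (simp add: mult.commute)
  ultimately show "m + \<delta> * (x $ j0 - m) \<le> (next_failure_mat *v x) $ i"
    by linarith
  have "0 \<le> next_failure_mat *v (M *\<^sub>R 1 - x - (M - x $ j0) *\<^sub>R axis j0 1)"
    using x by (intro next_failure_nonneg) (simp add: less_eq_vec_def axis_def)
  then have "(next_failure_mat *v x) $ i \<le> M - (M - x $ j0) * (next_failure_mat *v axis j0 1) $ i"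
    by (simp add: less_eq_vec_def algebra_simps next_failure_mult_1)
  moreover have "\<delta> * (M - x $ j0) \<le> (M - x $ j0) * (next_failure_mat *v axis j0 1) $ i"
    using mult_right_mono[OF \<delta>[of i], of "M - x $ j0"] x(2)[of j0] by (simp add: mult.commute)
  ultimately show "(next_failure_mat *v x) $ i \<le> M - \<delta> * (M - x $ j0)"
    by linarith
qed

end

section \<open>The correction vector and the exponential estimate\<close>

locale stationary_bernoulli_chain = bernoulli_chain K p
  for K :: "real^'r::finite^'r" and p +
  fixes \<mu> :: "real^'r"
  assumes unique_class: "unique_closed_irreducible K" and stationary: "stationary K \<mu>"
begin

abbreviation pb :: real where
  "pb \<equiv> pbar \<mu> p"

abbreviation lam :: real where
  "lam \<equiv> pbar \<mu> p / (1 - pbar \<mu> p)"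

lemma mu_nonneg: "0 \<le> \<mu>"
  using stationary by (simp add: stationary_def prob_vector_def less_eq_vec_def)

lemma mu_inner_1: "\<mu> \<bullet> 1 = 1"
  using stationary by (simp add: stationary_def prob_vector_inner_1)

lemma mu_inner_K: "\<mu> \<bullet> (K *v x) = \<mu> \<bullet> x"
  using stationary by (simp add: stationary_def flip: dot_lmul_matrix)

lemma pbar_eq_inner: "pb = \<mu> \<bullet> pvec"
  by (simp add: pbar_def pvec_def)

text \<open>\<open>nu x = \<mu> D\<^sub>1\<^sub>-\<^sub>p K x\<close> is the paper's linear functional; it is invariant under the
  next-failure matrix and pins down the additive constant in the expansion of \<open>E\<^sub>\<eta>[S\<^sub>n]\<close>.\<close>

definition nu :: "real^'r \<Rightarrow> real" where
  "nu x = \<mu> \<bullet> (trial_mat False *v x)"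

lemma nu_diff_scaleR_1: "nu (x - c *\<^sub>R 1) = nu x - c * (1 - pb)"
  by (simp add: nu_def matrix_vector_mult_diff_distrib matrix_vector_mult_scaleR trial_mat_mult_1
      inner_diff_right mu_inner_1 pbar_eq_inner)

lemma one_minus_pbar_pos: "0 < 1 - pb"
proof -
  have "\<exists>i. 0 < \<mu> $ i"
  proof (rule ccontr)
    assume "\<nexists>i. 0 < \<mu> $ i"
    then have "(\<Sum>i\<in>UNIV. \<mu> $ i) \<le> 0"
      by (intro sum_nonpos) (simp add: not_less)
    then show False
      using stationary by (simp add: stationary_def prob_vector_def)
  qed
  then obtain i where "0 < \<mu> $ i" ..
  then have "0 < (\<Sum>j\<in>UNIV. \<mu> $ j * (1 - p j))"
    using mu_nonneg p_less_1 by (intro sum_pos2[of UNIV i]) (auto simp: less_eq_vec_def less_imp_le)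
  then show ?thesis
    using nu_diff_scaleR_1[of 0 "-1"]
    by (simp add: nu_def trial_mat_mult_1 inner_vec_def pvec_def)
qed

lemma nu_next_failure: "nu (next_failure_mat *v x) = nu x"
proof -
  define y where "y = next_failure_mat *v x"
  then have "\<mu> \<bullet> y = \<mu> \<bullet> (trial_mat True *v y) + nu x"
    by (metis inner_add_right next_failure_mat_iff nu_def)
  moreover have "\<mu> \<bullet> y = \<mu> \<bullet> (trial_mat True *v y) + nu y"
    using mu_inner_K[of y] by (simp add: nu_def flip: inner_add_right trial_mat_True_False)
  ultimately show ?thesis
    by (simp add: y_def)
qed

lemma nu_bounds:
  assumes "\<And>i. m \<le> x $ i" and "\<And>i. x $ i \<le> M"
  shows "m * (1 - pb) \<le> nu x" and "nu x \<le> M * (1 - pb)"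
proof -
  have "m *\<^sub>R 1 \<le> x" "x \<le> M *\<^sub>R 1"
    using assms by (simp_all add: less_eq_vec_def)
  then have "nu (m *\<^sub>R 1) \<le> nu x" "nu x \<le> nu (M *\<^sub>R 1)"
    unfolding nu_def
    by (intro inner_mono_nonneg[OF mu_nonneg] nonneg_matrix_mono[OF trial_mat_nonneg]; simp)+
  then show "m * (1 - pb) \<le> nu x" "nu x \<le> M * (1 - pb)"
    using nu_diff_scaleR_1[of 0 "- m"] nu_diff_scaleR_1[of 0 "- M"] by (simp_all add: nu_def)
qed

lemma nu_eq_0_sign_change:
  assumes "nu x = 0" and "\<And>i. m \<le> x $ i" and "\<And>i. x $ i \<le> M"
  shows "m \<le> 0" and "0 \<le> M"
  using nu_bounds[OF assms(2,3)] one_minus_pbar_pos assms(1)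
  by (simp_all add: mult_le_0_iff zero_le_mult_iff)

lemma next_failure_fixpoint_eq_0:
  assumes fixed: "next_failure_mat *v x = x" and "nu x = 0"
  shows "x = 0"
proof -
  obtain j0 \<delta> where \<delta>: "0 < \<delta>" "\<And>i. \<delta> \<le> (next_failure_mat *v axis j0 1) $ i"
    using next_failure_doeblin[OF unique_class] by metis
  obtain iM where iM: "\<And>i. x $ i \<le> x $ iM"
    using ex_max_finite_UNIV[of "\<lambda>i. x $ i"] by blast
  obtain im where im: "\<And>i. x $ im \<le> x $ i"
    using ex_min_finite_UNIV[of "\<lambda>i. x $ i"] by blast
  have "x $ iM \<le> x $ iM - \<delta> * (x $ iM - x $ j0)"
    using next_failure_contract(2)[OF \<delta>(2) im iM, of iM] fixed by simp
  then have "x $ iM \<le> x $ j0"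
    using \<delta>(1) by (simp add: mult_le_0_iff)
  moreover have "x $ im + \<delta> * (x $ j0 - x $ im) \<le> x $ im"
    using next_failure_contract(1)[OF \<delta>(2) im iM, of im] fixed by simp
  then have "x $ j0 \<le> x $ im"
    using \<delta>(1) by (simp add: mult_le_0_iff)
  moreover have "x $ im \<le> 0" "0 \<le> x $ iM"
    using nu_eq_0_sign_change[OF \<open>nu x = 0\<close> im iM] by auto
  ultimately show ?thesis
    using im iM by (simp add: vec_eq_iff) (meson order.antisym order.trans)
qed


definition r_mat :: "real^'r^'r" where
  "r_mat = mat 1 - K + (1 / (1 - pb)) *\<^sub>R
      outer_prod (1 - (\<chi> i. p i)) (\<mu> v* (diag_mat (\<lambda>i. 1 - p i) ** K))"

lemma r_mat_mult: "r_mat *v x = x - K *v x + (nu x / (1 - pb)) *\<^sub>R (1 - pvec)"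
proof -
  have "diag_mat (\<lambda>i. 1 - p i) ** K = trial_mat False"
    by (simp add: vec_eq_iff matrix_matrix_mult_def diag_mat_def trial_mat_def trial_prob_def
        if_distrib[of "\<lambda>c. c * _"] cong: if_cong)
  moreover have "outer_prod u w *v x = (w \<bullet> x) *\<^sub>R u" for u w :: "real^'r"
    by (simp add: vec_eq_iff outer_prod_def matrix_vector_mult_def inner_vec_def
        sum_distrib_left mult_ac)
  ultimately show ?thesis
    by (simp add: r_mat_def nu_def pvec_def dot_lmul_matrix matrix_vector_mult_add_rdistrib
        matrix_vector_mult_diff_rdistrib flip: scaleR_matrix_vector_assoc)
qed

lemma mu_inner_r_mat: "\<mu> \<bullet> (r_mat *v x) = nu x"
  using one_minus_pbar_pos
  by (simp add: r_mat_mult inner_diff_right inner_add_right mu_inner_K mu_inner_1 pbar_eq_inner)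

lemma invertible_r_mat: "invertible r_mat"
proof -
  have "x = 0" if "r_mat *v x = 0" for x
  proof -
    have "nu x = 0"
      using mu_inner_r_mat[of x] that by simp
    then have "x = trial_mat True *v x + trial_mat False *v x"
      using that by (simp add: r_mat_mult trial_mat_True_False)
    then have "next_failure_mat *v x = x"
      by (simp add: next_failure_mat_iff)
    then show "x = 0"
      using \<open>nu x = 0\<close> by (rule next_failure_fixpoint_eq_0)
  qed
  then show ?thesis
    by (simp add: invertible_left_inverse matrix_left_invertible_ker)
qed

abbreviation rvec :: "real^'r" where
  "rvec \<equiv> r_vec K p \<mu>"

lemma rvec_defining_eqs:
  shows "nu rvec = 0" and "rvec - K *v rvec = pvec - lam *\<^sub>R (1 - pvec)"
proof -
  define z where "z = matrix_inv r_mat *v pvec"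
  have rvec_eq: "rvec = z - lam *\<^sub>R 1"
    by (simp add: z_def r_vec_def Let_def r_mat_def pvec_def)
  have "r_mat *v z = pvec"
    using matrix_inv_right[OF invertible_r_mat] by (simp add: z_def matrix_vector_mul_assoc)
  then have nu_z: "nu z = pb" and z_eq: "z - K *v z + (nu z / (1 - pb)) *\<^sub>R (1 - pvec) = pvec"
    using mu_inner_r_mat[of z] by (simp_all add: r_mat_mult pbar_eq_inner)
  show "nu rvec = 0"
    using one_minus_pbar_pos by (simp add: rvec_eq nu_diff_scaleR_1 nu_z)
  show "rvec - K *v rvec = pvec - lam *\<^sub>R (1 - pvec)"
    using z_eq nu_z
    by (simp add: rvec_eq matrix_vector_mult_diff_distrib matrix_vector_mult_scaleR
        stochastic_mult_1[OF stochastic] algebra_simps)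
qed

definition Sn_error :: "nat \<Rightarrow> real^'r" where
  "Sn_error n = Sn_mean_vec n - (lam * real n) *\<^sub>R 1 - rvec"

lemma Sn_error_Suc: "Sn_error (Suc n) = next_failure_mat *v Sn_error n"
proof -
  let ?m = Sn_mean_vec
  define l where "l = lam"
  have "Sn_error (Suc n) $ i
      = p i * (K *v Sn_error (Suc n)) $ i + (1 - p i) * (K *v Sn_error n) $ i" for i
  proof -
    have m: "?m (Suc n) $ i = p i * (K *v ?m (Suc n)) $ i + p i + (1 - p i) * (K *v ?m n) $ i"
      using arg_cong[OF Sn_mean_vec_Suc, of "\<lambda>v. v $ i"]
      by (simp add: trial_mat_mult_component trial_prob_def matrix_vector_right_distrib
          stochastic_mult_1[OF stochastic])
    have r: "rvec $ i = (K *v rvec) $ i + p i - l * (1 - p i)"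
      using arg_cong[OF rvec_defining_eqs(2), of "\<lambda>v. v $ i"] by (simp add: pvec_def l_def)
    have Ke: "(K *v Sn_error k) $ i = (K *v ?m k) $ i - l * real k - (K *v rvec) $ i" for k
      by (simp add: Sn_error_def l_def matrix_vector_mult_diff_distrib matrix_vector_mult_scaleR
          stochastic_mult_1[OF stochastic])
    show ?thesis
      unfolding Ke Sn_error_def[folded l_def]
      by (simp add: m r algebra_simps stochastic_mult_1[OF stochastic])
  qed
  then have "Sn_error (Suc n)
      = trial_mat True *v Sn_error (Suc n) + trial_mat False *v Sn_error n"
    by (simp add: vec_eq_iff trial_mat_mult_component trial_prob_def)
  then show ?thesis
    by (simp add: next_failure_mat_iff)
qed

lemma nu_Sn_error: "nu (Sn_error n) = 0"
proof (induction n)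
  case 0
  then show ?case
    using rvec_defining_eqs(1) matrix_vector_mult_diff_distrib[of "trial_mat False" 0 rvec]
    by (simp add: Sn_error_def Sn_mean_vec_0 nu_def)
next
  case (Suc n)
  then show ?case
    by (simp add: Sn_error_Suc nu_next_failure)
qed


lemma Sn_error_oscillation:
  assumes \<delta>: "\<delta> \<le> 1" "\<And>i. \<delta> \<le> (next_failure_mat *v axis j0 1) $ i"
  shows "\<exists>m M. (\<forall>i. m \<le> Sn_error n $ i \<and> Sn_error n $ i \<le> M)
    \<and> M - m \<le> (1 - \<delta>) ^ n * (2 * norm rvec)"
proof (induction n)
  case 0
  show ?case
    using component_le_norm_cart[of rvec]
    by (intro exI[of _ "- norm rvec"] exI[of _ "norm rvec"])
      (auto simp: Sn_error_def Sn_mean_vec_0 abs_le_iff)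
next
  case (Suc n)
  then obtain m M where m: "\<And>i. m \<le> Sn_error n $ i" and M: "\<And>i. Sn_error n $ i \<le> M"
    and width: "M - m \<le> (1 - \<delta>) ^ n * (2 * norm rvec)"
    by blast
  have "(1 - \<delta>) * (M - m) \<le> (1 - \<delta>) ^ Suc n * (2 * norm rvec)"
    using mult_left_mono[OF width, of "1 - \<delta>"] \<delta>(1) by (simp add: mult.assoc)
  then show ?case
    using next_failure_contract[OF \<delta>(2) m M]
    by (intro exI[of _ "m + \<delta> * (Sn_error n $ j0 - m)"] exI[of _ "M - \<delta> * (M - Sn_error n $ j0)"])
      (simp add: Sn_error_Suc algebra_simps)
qed

lemma Sn_error_abs_le:
  assumes "\<delta> \<le> 1" "\<And>i. \<delta> \<le> (next_failure_mat *v axis j0 1) $ i"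
  shows "\<bar>Sn_error n $ i\<bar> \<le> (1 - \<delta>) ^ n * (2 * norm rvec)"
proof -
  obtain m M where m: "\<And>i. m \<le> Sn_error n $ i" and M: "\<And>i. Sn_error n $ i \<le> M"
    and width: "M - m \<le> (1 - \<delta>) ^ n * (2 * norm rvec)"
    using Sn_error_oscillation[OF assms] by blast
  moreover have "m \<le> 0" "0 \<le> M"
    using nu_eq_0_sign_change[OF nu_Sn_error m M] by auto
  ultimately show ?thesis
    unfolding abs_le_iff using m[of i] M[of i] by linarith
qed

lemma expect_Sn_deviation_le:
  assumes "prob_vector \<eta>" and "\<delta> \<le> 1" "\<And>i. \<delta> \<le> (next_failure_mat *v axis j0 1) $ i"
  shows "\<bar>expect_Sn K p \<eta> n - lam * real n - \<eta> \<bullet> rvec\<bar> \<le> (1 - \<delta>) ^ n * (2 * norm rvec)"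
proof -
  have "\<bar>\<eta> \<bullet> Sn_error n\<bar> \<le> (1 - \<delta>) ^ n * (2 * norm rvec)"
    using assms(1) Sn_error_abs_le[OF assms(2,3)] by (rule prob_vector_inner_abs_le)
  moreover have "\<eta> \<bullet> Sn_error n = expect_Sn K p \<eta> n - lam * real n - \<eta> \<bullet> rvec"
    using assms(1)
    by (simp add: Sn_error_def inner_diff_right expect_Sn_eq_inner prob_vector_inner_1 mult.commute)
  ultimately show ?thesis
    by simp
qed

lemma expect_Sn_ratio_tendsto:
  assumes "prob_vector \<eta>"
  shows "(\<lambda>n. expect_Sn K p \<eta> n / real n) \<longlonglongrightarrow> lam"
proof (rule tendsto_ratio_of_bounded_deviation)
  obtain j0 \<delta> where \<delta>: "0 < \<delta>" "\<delta> \<le> 1/2" "\<And>i. \<delta> \<le> (next_failure_mat *v axis j0 1) $ i"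
    using next_failure_doeblin[OF unique_class] by metis
  fix n
  have "\<delta> \<le> 1"
    using \<delta>(2) by simp
  have "(1 - \<delta>) ^ n * (2 * norm rvec) \<le> 2 * norm rvec"
    using \<delta> by (intro mult_left_le_one_le power_le_one) auto
  then show "\<bar>expect_Sn K p \<eta> n - lam * real n\<bar> \<le> 2 * norm rvec + \<bar>\<eta> \<bullet> rvec\<bar>"
    using expect_Sn_deviation_le[OF assms \<open>\<delta> \<le> 1\<close> \<delta>(3), of n] by (smt (verit))
qed

lemma expect_Sn_exponential_expansion:
  "\<exists>c1 c2. c1 > 0 \<and> c2 > 0 \<and> (\<forall>n::nat. \<forall>\<eta>. prob_vector \<eta> \<longrightarrow>
     \<bar>expect_Sn K p \<eta> n - lam * real n - \<eta> \<bullet> rvec\<bar> \<le> c1 * exp (- c2 * real n))"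
proof -
  obtain j0 \<delta> where \<delta>: "0 < \<delta>" "\<delta> \<le> 1/2" "\<And>i. \<delta> \<le> (next_failure_mat *v axis j0 1) $ i"
    using next_failure_doeblin[OF unique_class] by metis
  have "\<delta> \<le> 1"
    using \<delta>(2) by simp
  have exp_eq: "exp (- (- ln (1 - \<delta>)) * real n) = (1 - \<delta>) ^ n" for n
  proof -
    have "exp (- (- ln (1 - \<delta>)) * real n) = exp (ln (1 - \<delta>)) ^ n"
      by (simp add: mult.commute flip: exp_of_nat_mult)
    then show ?thesis
      using \<delta> by simp
  qed
  have bound: "\<bar>expect_Sn K p \<eta> n - lam * real n - \<eta> \<bullet> rvec\<bar>
      \<le> (2 * norm rvec + 1) * (1 - \<delta>) ^ n" if "prob_vector \<eta>" for \<eta> n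
  proof -
    have "0 \<le> (1 - \<delta>) ^ n"
      using \<open>\<delta> \<le> 1\<close> by simp
    moreover have "(2 * norm rvec + 1) * (1 - \<delta>) ^ n = (1 - \<delta>) ^ n * (2 * norm rvec) + (1 - \<delta>) ^ n"
      by (simp add: algebra_simps)
    ultimately show ?thesis
      using expect_Sn_deviation_le[OF that \<open>\<delta> \<le> 1\<close> \<delta>(3), of n] by linarith
  qed
  show ?thesis
  proof (rule exI[of _ "2 * norm rvec + 1"], rule exI[of _ "- ln (1 - \<delta>)"], intro conjI allI impI)
    show "0 < 2 * norm rvec + 1" "0 < - ln (1 - \<delta>)"
      using \<delta> by (simp_all add: add_nonneg_pos)
    fix n :: nat and \<eta> :: "real^'r"
    assume "prob_vector \<eta>"
    then show "\<bar>expect_Sn K p \<eta> n - lam * real n - \<eta> \<bullet> rvec\<bar>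
        \<le> (2 * norm rvec + 1) * exp (- (- ln (1 - \<delta>)) * real n)"
      unfolding exp_eq by (rule bound)
  qed
qed

end

theorem proposition3p1:
  fixes K :: "real^'r::finite^'r" and p :: "'r \<Rightarrow> real" and \<mu> :: "real^'r"
  assumes "stochastic_matrix K"
    and "unique_closed_irreducible K"
    and "stationary K \<mu>"
    and "\<forall>i. 0 < p i \<and> p i < 1"
  shows "(\<forall>\<eta>. prob_vector \<eta> \<longrightarrow>
           (\<lambda>n. expect_Sn K p \<eta> n / real n) \<longlonglongrightarrow> pbar \<mu> p / (1 - pbar \<mu> p))
       \<and> (\<exists>c1 c2. c1 > 0 \<and> c2 > 0 \<and>
           (\<forall>n::nat. \<forall>\<eta>. prob_vector \<eta> \<longrightarrow>
              \<bar>expect_Sn K p \<eta> n - pbar \<mu> p / (1 - pbar \<mu> p) * real n - \<eta> \<bullet> r_vec K p \<mu>\<bar>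
                \<le> c1 * exp (- c2 * real n)))"
proof -
  interpret stationary_bernoulli_chain K p \<mu>
    using assms by unfold_locales auto
  show ?thesis
    using expect_Sn_ratio_tendsto expect_Sn_exponential_expansion by blast
qed

end
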